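(* Consider an agent-dependent SDP PEP for distributed optimization with $n$ agents, all of which are equivalent, and assume it admits a worst-case (optimal) solution. Then there is a worst-case instance such that (i) the worst-case sequences of iterates are unitary transformations of each other: there exist $R_i\in\mathbb{R}^{d\times d}$ with $R_i^TR_i=I$ such that $x_i^k=R_ix_1^k$ for all agents $i$ and all iterations $k$; and (ii) the worst-case local functions have equal values at their own iterates, $f_i(x_i^k)=f_j(x_j^k)$ for all $i,j$ and all $k$, and can be chosen identical up to a unitary change of variables: $f_i(x)=f_1(R_i^Tx)$ for all $i$, where $f_1$ is a function interpolating agent 1's worst-case iterates, gradients and function values.
   Context: Distributed optimization: $n$ agents with local functions $f_i:\mathbb{R}^d\to\mathbb{R}$ minimize $\frac1n\sum_if_i(x)$ via an algorithm using local gradient evaluations, consensus steps with averaging matrices, and linear combinations of local variables. In the agent-dependent SDP PEP, each agent $i$ holds $p$ vector variables (iterates $x_i^k$, gradients $g_i^k=\nabla f_i(x_i^k)$, other local variables) as columns of $P_i\in\mathbb{R}^{d\times p}$ in a common order and $q$ function values $f_i^k=f_i(x_i^k)$ in $f_i\in\mathbb{R}^q$; the variables are $F=[f_1^T\dots f_n^T]$ and $G=P^TP\succeq0$ with $G_{ij}=P_i^TP_j$; objective and constraints (including interpolation constraints ensuring each agent's triplets $(x_i^k,g_i^k,f_i^k)$ are interpolated by a function of the given class) are linear or LMI in $(F,G)$. A worst-case instance is obtained from an optimal $(F,G)$ by factoring $G=P^TP$ and interpolating each agent's triplets. Agents $i,j$ are equivalent if swapping their blocks in any feasible solution yields a feasible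 solution with the same objective value. *)

theory Defs
  imports "HOL-Analysis.Analysis"
begin

text \<open>Index set of the Gram matrix: pairs (agent i, local column c), i < n, c < p.
  Agent 1 of the paper is agent index 0 here.\<close>
definition blk :: "nat \<Rightarrow> nat \<Rightarrow> (nat \<times> nat) set" where
  "blk n p = {0..<n} \<times> {0..<p}"

definition psd_on :: "'a set \<Rightarrow> ('a \<Rightarrow> 'a \<Rightarrow> real) \<Rightarrow> bool" where
  "psd_on I M \<longleftrightarrow> (\<forall>a\<in>I. \<forall>b\<in>I. M a b = M b a) \<and>
     (\<forall>v. 0 \<le> (\<Sum>a\<in>I. \<Sum>b\<in>I. v a * M a b * v b))"

text \<open>A linear matrix inequality in (F,G):
  M0 + sum F_iv AF_iv + sum G_ab AG_ab is PSD (of size dim).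
  Linear inequalities are 1x1 LMIs, equalities are pairs of them.\<close>
record lmi =
  lmi_dim :: nat
  lmi_M0 :: "nat \<Rightarrow> nat \<Rightarrow> real"
  lmi_AF :: "nat \<Rightarrow> nat \<Rightarrow> nat \<Rightarrow> nat \<Rightarrow> real"
  lmi_AG :: "nat \<times> nat \<Rightarrow> nat \<times> nat \<Rightarrow> nat \<Rightarrow> nat \<Rightarrow> real"

definition lmi_holds ::
  "nat \<Rightarrow> nat \<Rightarrow> nat \<Rightarrow> lmi \<Rightarrow> (nat \<Rightarrow> nat \<Rightarrow> real) \<Rightarrow> (nat \<times> nat \<Rightarrow> nat \<times> nat \<Rightarrow> real) \<Rightarrow> bool" where
  "lmi_holds n p q c F G \<longleftrightarrow>
     psd_on {0..<lmi_dim c} (\<lambda>r s. lmi_M0 c r s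
        + (\<Sum>i<n. \<Sum>v<q. F i v * lmi_AF c i v r s)
        + (\<Sum>a\<in>blk n p. \<Sum>b\<in>blk n p. G a b * lmi_AG c a b r s))"

text \<open>F i v = v-th function value of agent i (v < q);
  G (i,c) (j,c') = entry (c,c') of block G_ij = P_i^T P_j.\<close>
definition pep_feasible ::
  "nat \<Rightarrow> nat \<Rightarrow> nat \<Rightarrow> lmi list \<Rightarrow> (nat \<Rightarrow> nat \<Rightarrow> real) \<Rightarrow> (nat \<times> nat \<Rightarrow> nat \<times> nat \<Rightarrow> real) \<Rightarrow> bool" where
  "pep_feasible n p q cs F G \<longleftrightarrow> psd_on (blk n p) G \<and> (\<forall>c\<in>set cs. lmi_holds n p q c F G)"

definition pep_obj ::
  "nat \<Rightarrow> nat \<Rightarrow> nat \<Rightarrow> (nat \<Rightarrow> nat \<Rightarrow> real) \<Rightarrow> (nat \<times> nat \<Rightarrow> nat \<times> nat \<Rightarrow> real)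
   \<Rightarrow> (nat \<Rightarrow> nat \<Rightarrow> real) \<Rightarrow> (nat \<times> nat \<Rightarrow> nat \<times> nat \<Rightarrow> real) \<Rightarrow> real" where
  "pep_obj n p q cF cG F G =
     (\<Sum>i<n. \<Sum>v<q. cF i v * F i v) + (\<Sum>a\<in>blk n p. \<Sum>b\<in>blk n p. cG a b * G a b)"

definition pep_optimal where
  "pep_optimal n p q cs cF cG F G \<longleftrightarrow> pep_feasible n p q cs F G \<and>
     (\<forall>F' G'. pep_feasible n p q cs F' G' \<longrightarrow> pep_obj n p q cF cG F' G' \<le> pep_obj n p q cF cG F G)"

definition swap_agent :: "nat \<Rightarrow> nat \<Rightarrow> nat \<Rightarrow> nat" where
  "swap_agent i j a = (if a = i then j else if a = j then i else a)"

definition swapF :: "nat \<Rightarrow> nat \<Rightarrow> (nat \<Rightarrow> nat \<Rightarrow> real) \<Rightarrow> (nat \<Rightarrow> nat \<Rightarrow> real)" where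
  "swapF i j F = (\<lambda>a v. F (swap_agent i j a) v)"

definition swapG :: "nat \<Rightarrow> nat \<Rightarrow> (nat \<times> nat \<Rightarrow> nat \<times> nat \<Rightarrow> real) \<Rightarrow> (nat \<times> nat \<Rightarrow> nat \<times> nat \<Rightarrow> real)" where
  "swapG i j G = (\<lambda>a b. G (swap_agent i j (fst a), snd a) (swap_agent i j (fst b), snd b))"

definition agents_equivalent where
  "agents_equivalent n p q cs cF cG i j \<longleftrightarrow>
     (\<forall>F G. pep_feasible n p q cs F G \<longrightarrow>
        pep_feasible n p q cs (swapF i j F) (swapG i j G) \<and>
        pep_obj n p q cF cG (swapF i j F) (swapG i j G) = pep_obj n p q cF cG F G)"

text \<open>P (i,c) = column c of P_i in R^d; G = P^T P.\<close>
definition is_gram :: "nat \<Rightarrow> nat \<Rightarrow> (nat \<times> nat \<Rightarrow> nat \<times> nat \<Rightarrow> real) \<Rightarrow> (nat \<times> nat \<Rightarrow> 'v::real_inner) \<Rightarrow> bool" where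
  "is_gram n p G P \<longleftrightarrow> (\<forall>a\<in>blk n p. \<forall>b\<in>blk n p. G a b = inner (P a) (P b))"

text \<open>Triplets (x_i^k, g_i^k, f_i^k), k < m, of agent i: iterate x_i^k is column xc k,
  gradient g_i^k is column gc k, value f_i^k is entry fv k.\<close>
definition agent_triplets where
  "agent_triplets m xc gc fv P F i = {(P (i, xc k), P (i, gc k), F i (fv k)) | k. k < m}"

definition interpolates :: "('v::real_inner \<Rightarrow> real) set \<Rightarrow> ('v \<Rightarrow> real) \<Rightarrow> ('v \<times> 'v \<times> real) set \<Rightarrow> bool" where
  "interpolates Fc f T \<longleftrightarrow> f \<in> Fc \<and>
     (\<forall>(x, g, v)\<in>T. f x = v \<and> (f has_derivative (\<lambda>h. inner g h)) (at x))"

end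

theory Submission
  imports Defs "HOL-Combinatorics.Permutations"
begin

text \<open>Averaging an optimal solution over all permutations of the agents gives again an
  optimal solution: every permutation is a product of swaps, which preserve feasibility and the
  objective, and the feasible set, cut out by LMIs, is convex. The average is invariant under all
  permutations, so all agents share their function values and all diagonal Gram blocks
  \<open>P\<^sub>i\<^sup>T P\<^sub>i\<close> coincide. Equal Gram blocks mean that the columns of \<open>P\<^sub>i\<close> are an isometric
  image of those of \<open>P\<^sub>1\<close>, and such a partial isometry extends to an orthogonal \<open>R\<^sub>i\<close> (a product
  of reflections). Finally, \<open>x \<mapsto> f\<^sub>1 (R\<^sub>i\<^sup>T x)\<close> interpolates the data of agent \<open>i\<close>, and it stays
  in the function class, which is invariant under orthogonal changes of variables.\<close>

lemma psd_on_quadratic_form_nonneg: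
  "psd_on I M \<Longrightarrow> 0 \<le> (\<Sum>x\<in>I. \<Sum>y\<in>I. v x * M x y * v y)"
  unfolding psd_on_def by blast

lemma psd_on_sym: "psd_on I M \<Longrightarrow> a \<in> I \<Longrightarrow> b \<in> I \<Longrightarrow> M a b = M b a"
  unfolding psd_on_def by blast

lemma quadratic_form_supported:
  fixes M :: "'a \<Rightarrow> 'a \<Rightarrow> real"
  assumes "finite I" "J \<subseteq> I" "\<forall>x\<in>I - J. v x = 0"
  shows "(\<Sum>x\<in>I. \<Sum>y\<in>I. v x * M x y * v y) = (\<Sum>x\<in>J. \<Sum>y\<in>J. v x * M x y * v y)"
proof -
  have "(\<Sum>x\<in>I. \<Sum>y\<in>I. v x * M x y * v y) = (\<Sum>x\<in>J. \<Sum>y\<in>I. v x * M x y * v y)"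
    using assms by (intro sum.mono_neutral_right) auto
  also have "\<dots> = (\<Sum>x\<in>J. \<Sum>y\<in>J. v x * M x y * v y)"
    using assms by (intro sum.cong refl sum.mono_neutral_right) auto
  finally show ?thesis .
qed

lemma psd_on_diag_nonneg:
  assumes "finite I" "psd_on I M" "a \<in> I"
  shows "0 \<le> M a a"
proof -
  let ?v = "\<lambda>x. if x = a then 1 else 0 :: real"
  have "0 \<le> (\<Sum>x\<in>I. \<Sum>y\<in>I. ?v x * M x y * ?v y)"
    using assms(2) by (rule psd_on_quadratic_form_nonneg)
  also have "\<dots> = M a a"
    using assms by (subst quadratic_form_supported[where J = "{a}"]) auto
  finally show ?thesis .
qed

lemma psd_on_zero_diag_imp_zero_row:
  assumes "finite I" "psd_on I M" "a \<in> I" "b \<in> I" "M a a = 0"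
  shows "M a b = 0"
proof (rule ccontr)
  assume ne: "M a b \<noteq> 0"
  then have "a \<noteq> b" using assms(5) by auto
  define t where "t = - (M b b + 1) / (2 * M a b)"
  let ?v = "\<lambda>x. if x = a then t else if x = b then 1 else 0 :: real"
  have "0 \<le> (\<Sum>x\<in>I. \<Sum>y\<in>I. ?v x * M x y * ?v y)"
    using assms(2) by (rule psd_on_quadratic_form_nonneg)
  also have "\<dots> = t * t * M a a + t * M a b + t * M b a + M b b"
    using assms \<open>a \<noteq> b\<close> by (subst quadratic_form_supported[where J = "{a, b}"]) (auto simp: algebra_simps)
  also have "\<dots> = -1"
    using assms psd_on_sym[OF assms(2,3,4)] ne by (simp add: t_def field_simps)
  finally show False by simp
qed

lemma quadratic_form_insert:
  fixes M :: "'a \<Rightarrow> 'a \<Rightarrow> real"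
  assumes "finite I" "a \<notin> I" "\<forall>x\<in>I. M a x = M x a"
  shows "(\<Sum>x\<in>insert a I. \<Sum>y\<in>insert a I. w x * M x y * w y)
    = w a * w a * M a a + 2 * w a * (\<Sum>x\<in>I. w x * M x a) + (\<Sum>x\<in>I. \<Sum>y\<in>I. w x * M x y * w y)"
  using assms by (simp add: sum.distrib sum_distrib_left algebra_simps cong: sum.cong)

lemma psd_on_schur_complement:
  assumes fin: "finite I" and aI: "a \<notin> I" and psd: "psd_on (insert a I) M"
  shows "psd_on I (\<lambda>x y. M x y - M x a * M a y / M a a)"
  unfolding psd_on_def
proof (intro conjI ballI allI)
  fix x y assume "x \<in> I" "y \<in> I"
  then show "M x y - M x a * M a y / M a a = M y x - M y a * M a x / M a a"
    using psd_on_sym[OF psd] by simp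
next
  fix v :: "'a \<Rightarrow> real"
  have sym_a: "\<forall>x\<in>I. M a x = M x a" using psd_on_sym[OF psd] by simp
  define s where "s = (\<Sum>x\<in>I. v x * M x a)"
  define w where "w = v(a := - s / M a a)"
  have "0 \<le> (\<Sum>x\<in>insert a I. \<Sum>y\<in>insert a I. w x * M x y * w y)"
    using psd by (rule psd_on_quadratic_form_nonneg)
  also have "\<dots> = (\<Sum>x\<in>I. \<Sum>y\<in>I. v x * M x y * v y) - s * s / M a a"
  proof -
    have "w x = v x" if "x \<in> I" for x using aI that by (auto simp: w_def)
    then have "(\<Sum>x\<in>I. w x * M x a) = s"
      and "(\<Sum>x\<in>I. \<Sum>y\<in>I. w x * M x y * w y) = (\<Sum>x\<in>I. \<Sum>y\<in>I. v x * M x y * v y)"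
      by (simp_all add: s_def cong: sum.cong)
    moreover have "w a * w a * M a a + 2 * w a * s = - s * s / M a a"
      by (cases "M a a = 0") (simp_all add: w_def field_simps)
    ultimately show ?thesis unfolding quadratic_form_insert[OF fin aI sym_a] by simp
  qed
  also have "\<dots> = (\<Sum>x\<in>I. \<Sum>y\<in>I. v x * (M x y - M x a * M a y / M a a) * v y)"
  proof -
    have "s * s = (\<Sum>x\<in>I. \<Sum>y\<in>I. (v x * M x a) * (M a y * v y))"
      using sym_a by (simp add: s_def sum_product mult.commute cong: sum.cong)
    then show ?thesis
      by (simp add: sum_divide_distrib sum_subtractf algebra_simps)
  qed
  finally show "0 \<le> (\<Sum>x\<in>I. \<Sum>y\<in>I. v x * (M x y - M x a * M a y / M a a) * v y)" .
qed

text \<open>One step of a Cholesky factorisation, along a fresh unit vector \<open>e\<close>. When \<open>M a a = 0\<close> the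
  row of \<open>a\<close> vanishes, so the formula remains correct with \<open>x / 0 = 0\<close>.\<close>
lemma gram_extend_by_schur_complement:
  fixes e :: "'v::real_inner" and U :: "'a \<Rightarrow> 'v"
  assumes sym: "\<forall>x\<in>I. M a x = M x a"
    and diag: "0 \<le> M a a" "M a a = 0 \<Longrightarrow> \<forall>x\<in>I. M a x = 0"
    and e: "e \<bullet> e = 1" "\<forall>x\<in>I. e \<bullet> U x = 0"
    and U: "\<forall>x\<in>I. \<forall>y\<in>I. M x y - M x a * M a y / M a a = U x \<bullet> U y"
    and P: "P = (\<lambda>x. if x = a then sqrt (M a a) *\<^sub>R e else (M a x / sqrt (M a a)) *\<^sub>R e + U x)"
    and xy: "x \<in> insert a I" "y \<in> insert a I"
  shows "M x y = P x \<bullet> P y"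
proof -
  define r where "r = sqrt (M a a)"
  have rr: "r * r = M a a" using diag(1) by (simp add: r_def)
  have row: "r * (M a x / r) = M a x" if "x \<in> I" for x
    using diag(2) that rr by (cases "r = 0") auto
  have Pa: "P a = r *\<^sub>R e" and PI: "x \<in> I \<Longrightarrow> x \<noteq> a \<Longrightarrow> P x = (M a x / r) *\<^sub>R e + U x" for x
    by (simp_all add: P r_def)
  have eU: "x \<in> I \<Longrightarrow> U x \<bullet> e = 0" for x using e(2) by (simp add: inner_commute)
  consider "x = a" "y = a" | "x = a" "y \<noteq> a" "y \<in> I" | "x \<noteq> a" "x \<in> I" "y = a"
    | "x \<noteq> a" "y \<noteq> a" "x \<in> I" "y \<in> I"
    using xy by blast
  then show ?thesis
  proof cases
    case 1
    then show ?thesis by (simp add: Pa e(1) rr)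
  next
    case 2
    then show ?thesis using row e by (simp add: Pa PI inner_add_right)
  next
    case 3
    then show ?thesis using row[of x] eU e(1) sym by (simp add: Pa PI inner_add_left)
  next
    case 4
    have "P x \<bullet> P y = (M a x / r) * (M a y / r) + U x \<bullet> U y"
      using 4 e eU by (simp add: PI inner_add_left inner_add_right)
    also have "\<dots> = M x y" using 4 U sym rr by (simp add: field_simps)
    finally show ?thesis by simp
  qed
qed

text \<open>Confining the factors to the span of \<open>B\<close> keeps the remaining basis vectors orthogonal to
  them, ready for the next Cholesky step.\<close>
lemma psd_on_gram_factor_in_span:
  fixes M :: "'a \<Rightarrow> 'a \<Rightarrow> real" and B :: "'v::euclidean_space set"
  assumes "finite I" "psd_on I M" "B \<subseteq> Basis" "card I \<le> card B"
  shows "\<exists>P :: 'a \<Rightarrow> 'v. (\<forall>x\<in>I. P x \<in> span B) \<and> (\<forall>x\<in>I. \<forall>y\<in>I. M x y = P x \<bullet> P y)"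
  using assms
proof (induction I arbitrary: M B rule: finite_induct)
  case empty
  show ?case by simp
next
  case (insert a I)
  have "finite B" using insert.prems(2) finite_Basis finite_subset by blast
  have "B \<noteq> {}" using insert.prems(3) insert.hyps by auto
  then obtain e where eB: "e \<in> B" by blast
  have e_unit: "e \<bullet> e = 1" using eB insert.prems(2) by auto
  have "card I \<le> card (B - {e})"
    using insert.hyps insert.prems(3) \<open>finite B\<close> eB by (simp add: card_Diff_singleton)
  moreover have "psd_on I (\<lambda>x y. M x y - M x a * M a y / M a a)"
    using insert.hyps insert.prems(1) by (rule psd_on_schur_complement)
  ultimately obtain U where U_span: "\<forall>x\<in>I. U x \<in> span (B - {e})"
    and U: "\<forall>x\<in>I. \<forall>y\<in>I. M x y - M x a * M a y / M a a = U x \<bullet> U y"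
    using insert.IH[of _ "B - {e}"] insert.prems(2) by blast
  have e_orth: "\<forall>x\<in>I. e \<bullet> U x = 0"
  proof
    fix x assume "x \<in> I"
    have "orthogonal e (U x)"
    proof (rule orthogonal_to_span)
      show "U x \<in> span (B - {e})" using U_span \<open>x \<in> I\<close> by blast
      show "orthogonal e y" if "y \<in> B - {e}" for y
        using that eB insert.prems(2) by (auto simp: orthogonal_def intro: inner_not_same_Basis)
    qed
    then show "e \<bullet> U x = 0" by (simp add: orthogonal_def)
  qed
  have fin: "finite (insert a I)" using insert.hyps by simp
  have sym: "\<forall>x\<in>I. M a x = M x a" using psd_on_sym[OF insert.prems(1)] by simp
  have diag: "0 \<le> M a a" "M a a = 0 \<Longrightarrow> \<forall>x\<in>I. M a x = 0"
    using psd_on_diag_nonneg[OF fin insert.prems(1)] psd_on_zero_diag_imp_zero_row[OF fin insert.prems(1)]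
    by auto
  define P where "P = (\<lambda>x. if x = a then sqrt (M a a) *\<^sub>R e else (M a x / sqrt (M a a)) *\<^sub>R e + U x)"
  have "P x \<in> span B" if "x \<in> insert a I" for x
  proof -
    have "span (B - {e}) \<subseteq> span B" by (rule span_mono) blast
    then show ?thesis using that U_span eB by (auto simp: P_def span_base span_add span_mul)
  qed
  moreover have "\<forall>x\<in>insert a I. \<forall>y\<in>insert a I. M x y = P x \<bullet> P y"
    using gram_extend_by_schur_complement[OF sym diag e_unit e_orth U P_def] by blast
  ultimately show ?case by blast
qed

lemma psd_on_gram_factor:
  fixes M :: "'a \<Rightarrow> 'a \<Rightarrow> real"
  assumes "finite I" "psd_on I M" "card I \<le> DIM('v)"
  obtains P :: "'a \<Rightarrow> 'v::euclidean_space" where "\<forall>x\<in>I. \<forall>y\<in>I. M x y = P x \<bullet> P y"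
  using psd_on_gram_factor_in_span[OF assms(1,2) order_refl assms(3)] by blast

lemma orthogonal_transformation_reflection:
  fixes a :: "'a::euclidean_space"
  shows "orthogonal_transformation (\<lambda>x. x - (2 * (x \<bullet> a) / (a \<bullet> a)) *\<^sub>R a)"
  unfolding orthogonal_transformation_def
proof (intro conjI allI)
  show "linear (\<lambda>x. x - (2 * (x \<bullet> a) / (a \<bullet> a)) *\<^sub>R a)"
    by (rule linearI) (simp_all add: inner_add_left algebra_simps add_divide_distrib)
  fix v w :: 'a
  show "(v - (2 * (v \<bullet> a) / (a \<bullet> a)) *\<^sub>R a) \<bullet> (w - (2 * (w \<bullet> a) / (a \<bullet> a)) *\<^sub>R a) = v \<bullet> w"
    by (cases "a = 0")
      (simp_all add: inner_diff_left inner_diff_right inner_commute field_simps power2_eq_square)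
qed

text \<open>Once \<open>h\<close> maps the first \<open>k\<close> vectors correctly, the reflection in the hyperplane orthogonal
  to \<open>h (u k) - v k\<close> fixes every \<open>v c\<close> with \<open>c < k\<close> and sends \<open>h (u k)\<close> to \<open>v k\<close>.\<close>
lemma orthogonal_transformation_extends_gram:
  fixes u v :: "nat \<Rightarrow> 'a::euclidean_space"
  assumes "\<forall>c<k. \<forall>c'<k. u c \<bullet> u c' = v c \<bullet> v c'"
  shows "\<exists>h. orthogonal_transformation h \<and> (\<forall>c<k. h (u c) = v c)"
  using assms
proof (induction k)
  case 0
  show ?case using orthogonal_transformation_id by blast
next
  case (Suc k)
  then obtain h where h: "orthogonal_transformation h" "\<forall>c<k. h (u c) = v c" by auto
  define w where "w = h (u k)"
  define a where "a = w - v k"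
  define H where "H = (\<lambda>x. x - (2 * (x \<bullet> a) / (a \<bullet> a)) *\<^sub>R a)"
  have hw: "w \<bullet> h (u c) = v k \<bullet> v c" if "c \<le> k" for c
    using h(1) Suc.prems that unfolding w_def orthogonal_transformation_def by auto
  have "H (v c) = v c" if "c < k" for c
    using hw[of c] h(2) that by (simp add: H_def a_def inner_diff_right inner_commute)
  moreover have "H w = v k"
  proof (cases "a = 0")
    case False
    have "a \<bullet> a = 2 * (w \<bullet> a)"
      using hw[of k] by (simp add: a_def w_def inner_diff_left inner_diff_right inner_commute)
    moreover have "a \<bullet> a \<noteq> 0" using False by simp
    ultimately have "2 * (w \<bullet> a) / (a \<bullet> a) = 1" by simp
    then show ?thesis by (simp only: H_def scaleR_one) (simp add: a_def)
  qed (simp add: H_def a_def)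
  moreover have "orthogonal_transformation (H \<circ> h)"
    using orthogonal_transformation_compose[OF orthogonal_transformation_reflection h(1)]
    by (simp add: H_def)
  ultimately show ?case
    using h(2) less_Suc_eq unfolding w_def by (metis comp_apply)
qed

lemma orthogonal_matrix_extends_gram:
  fixes u v :: "nat \<Rightarrow> real^'n"
  assumes "\<forall>c<k. \<forall>c'<k. u c \<bullet> u c' = v c \<bullet> v c'"
  obtains R :: "real^'n^'n" where "orthogonal_matrix R" "\<forall>c<k. R *v u c = v c"
proof -
  obtain h where "orthogonal_transformation h" "\<forall>c<k. h (u c) = v c"
    using orthogonal_transformation_extends_gram[OF assms] by blast
  then show thesis
    using that[of "matrix h"] by (simp add: orthogonal_transformation_matrix matrix_works)
qed

definition mean :: "'s set \<Rightarrow> ('s \<Rightarrow> real) \<Rightarrow> real" where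
  "mean S h = (\<Sum>s\<in>S. h s) / card S"

lemma mean_cong: "(\<And>s. s \<in> S \<Longrightarrow> g s = h s) \<Longrightarrow> mean S g = mean S h"
  unfolding mean_def by (simp cong: sum.cong)

lemma mean_const: "finite S \<Longrightarrow> S \<noteq> {} \<Longrightarrow> mean S (\<lambda>_. c) = c"
  by (simp add: mean_def)

lemma mean_add: "mean S (\<lambda>s. g s + h s) = mean S g + mean S h"
  by (simp add: mean_def sum.distrib add_divide_distrib)

lemma mean_mult_left: "mean S (\<lambda>s. c * h s) = c * mean S h"
  by (simp add: mean_def sum_distrib_left)

lemma mean_mult_right: "mean S (\<lambda>s. h s * c) = mean S h * c"
  by (simp add: mean_def sum_distrib_right)

lemma mean_sum: "mean S (\<lambda>s. \<Sum>x\<in>X. h s x) = (\<Sum>x\<in>X. mean S (\<lambda>s. h s x))"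
  unfolding mean_def by (subst sum.swap) (simp add: sum_divide_distrib)

lemma mean_nonneg: "(\<And>s. s \<in> S \<Longrightarrow> 0 \<le> h s) \<Longrightarrow> 0 \<le> mean S h"
  unfolding mean_def by (simp add: sum_nonneg)

lemmas mean_linear = mean_add mean_mult_left mean_mult_right mean_sum

lemma psd_on_mean:
  fixes M :: "'s \<Rightarrow> 'a \<Rightarrow> 'a \<Rightarrow> real"
  assumes "\<forall>s\<in>S. psd_on I (M s)"
  shows "psd_on I (\<lambda>a b. mean S (\<lambda>s. M s a b))"
  unfolding psd_on_def
proof (intro conjI ballI allI)
  fix a b assume "a \<in> I" "b \<in> I"
  then show "mean S (\<lambda>s. M s a b) = mean S (\<lambda>s. M s b a)"
    using assms unfolding psd_on_def by (intro mean_cong) blast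
next
  fix v :: "'a \<Rightarrow> real"
  have "0 \<le> mean S (\<lambda>s. \<Sum>a\<in>I. \<Sum>b\<in>I. v a * M s a b * v b)"
    using assms by (intro mean_nonneg psd_on_quadratic_form_nonneg) blast
  then show "0 \<le> (\<Sum>a\<in>I. \<Sum>b\<in>I. v a * mean S (\<lambda>s. M s a b) * v b)"
    by (simp add: mean_linear)
qed

lemma pep_feasible_mean:
  assumes "finite S" "S \<noteq> {}" "\<forall>s\<in>S. pep_feasible n p q cs (Fs s) (Gs s)"
  shows "pep_feasible n p q cs (\<lambda>i v. mean S (\<lambda>s. Fs s i v)) (\<lambda>a b. mean S (\<lambda>s. Gs s a b))"
  unfolding pep_feasible_def
proof (intro conjI ballI)
  show "psd_on (blk n p) (\<lambda>a b. mean S (\<lambda>s. Gs s a b))"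
    using assms(3) by (intro psd_on_mean) (simp add: pep_feasible_def)
next
  fix c assume "c \<in> set cs"
  then have "psd_on {0..<lmi_dim c} (\<lambda>r t. mean S (\<lambda>s. lmi_M0 c r t
      + (\<Sum>i<n. \<Sum>v<q. Fs s i v * lmi_AF c i v r t)
      + (\<Sum>a\<in>blk n p. \<Sum>b\<in>blk n p. Gs s a b * lmi_AG c a b r t)))"
    using assms(3) by (intro psd_on_mean) (simp add: pep_feasible_def lmi_holds_def)
  then show "lmi_holds n p q c (\<lambda>i v. mean S (\<lambda>s. Fs s i v)) (\<lambda>a b. mean S (\<lambda>s. Gs s a b))"
    using assms(1,2) by (simp add: lmi_holds_def mean_linear mean_const)
qed

lemma pep_obj_mean:
  "pep_obj n p q cF cG (\<lambda>i v. mean S (\<lambda>s. Fs s i v)) (\<lambda>a b. mean S (\<lambda>s. Gs s a b))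
     = mean S (\<lambda>s. pep_obj n p q cF cG (Fs s) (Gs s))"
  by (simp add: pep_obj_def mean_linear)

lemma mean_permutations_compose_right:
  "\<tau> permutes A \<Longrightarrow> mean {\<sigma>. \<sigma> permutes A} (\<lambda>\<sigma>. h (\<sigma> \<circ> \<tau>)) = mean {\<sigma>. \<sigma> permutes A} h"
  unfolding mean_def by (simp add: sum_permutations_compose_right[symmetric])

definition permute_agents_F :: "(nat \<Rightarrow> nat) \<Rightarrow> (nat \<Rightarrow> nat \<Rightarrow> real) \<Rightarrow> (nat \<Rightarrow> nat \<Rightarrow> real)" where
  "permute_agents_F \<sigma> F = (\<lambda>i v. F (\<sigma> i) v)"

definition permute_agents_G ::
  "(nat \<Rightarrow> nat) \<Rightarrow> (nat \<times> nat \<Rightarrow> nat \<times> nat \<Rightarrow> real) \<Rightarrow> (nat \<times> nat \<Rightarrow> nat \<times> nat \<Rightarrow> real)" where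
  "permute_agents_G \<sigma> G = (\<lambda>a b. G (\<sigma> (fst a), snd a) (\<sigma> (fst b), snd b))"

lemma swap_agent_eq_transpose: "swap_agent i j = Transposition.transpose i j"
  by (rule ext) (simp add: swap_agent_def Transposition.transpose_def)

lemma pep_permute_agents:
  assumes "\<sigma> permutes {..<n}" "\<forall>i<n. \<forall>j<n. agents_equivalent n p q cs cF cG i j"
    and "pep_feasible n p q cs F G"
  shows "pep_feasible n p q cs (permute_agents_F \<sigma> F) (permute_agents_G \<sigma> G) \<and>
    pep_obj n p q cF cG (permute_agents_F \<sigma> F) (permute_agents_G \<sigma> G) = pep_obj n p q cF cG F G"
  using assms(1) finite_lessThan assms(3)
proof (induction \<sigma> arbitrary: F G rule: permutes_induct)
  case id
  then show ?case by (simp add: permute_agents_F_def permute_agents_G_def)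
next
  case (swap a b \<sigma>)
  have "permute_agents_F (Transposition.transpose a b \<circ> \<sigma>) F = permute_agents_F \<sigma> (swapF a b F)"
    and "permute_agents_G (Transposition.transpose a b \<circ> \<sigma>) G = permute_agents_G \<sigma> (swapG a b G)"
    by (simp_all add: permute_agents_F_def permute_agents_G_def swapF_def swapG_def
        swap_agent_eq_transpose)
  moreover have "pep_feasible n p q cs (swapF a b F) (swapG a b G)"
    and "pep_obj n p q cF cG (swapF a b F) (swapG a b G) = pep_obj n p q cF cG F G"
    using assms(2) swap.hyps swap.prems unfolding agents_equivalent_def by auto
  ultimately show ?case using swap.IH by metis
qed

lemma pep_optimal_mean:
  assumes "finite S" "S \<noteq> {}"
    and "\<forall>s\<in>S. pep_feasible n p q cs (Fs s) (Gs s) \<and>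
      pep_obj n p q cF cG (Fs s) (Gs s) = pep_obj n p q cF cG F0 G0"
    and "pep_optimal n p q cs cF cG F0 G0"
  shows "pep_optimal n p q cs cF cG (\<lambda>i v. mean S (\<lambda>s. Fs s i v)) (\<lambda>a b. mean S (\<lambda>s. Gs s a b))"
proof -
  have "pep_obj n p q cF cG (\<lambda>i v. mean S (\<lambda>s. Fs s i v)) (\<lambda>a b. mean S (\<lambda>s. Gs s a b))
      = mean S (\<lambda>_. pep_obj n p q cF cG F0 G0)"
    unfolding pep_obj_mean using assms(3) by (intro mean_cong) blast
  then show ?thesis
    using assms pep_feasible_mean[OF assms(1,2)] unfolding pep_optimal_def by (simp add: mean_const)
qed

lemma pep_optimal_agent_invariant_exists:
  assumes equiv: "\<forall>i<n. \<forall>j<n. agents_equivalent n p q cs cF cG i j"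
    and opt: "pep_optimal n p q cs cF cG F0 G0"
  obtains F G where "pep_optimal n p q cs cF cG F G"
    and "\<And>\<tau>. \<tau> permutes {..<n} \<Longrightarrow> permute_agents_F \<tau> F = F \<and> permute_agents_G \<tau> G = G"
proof -
  define S where "S = {\<sigma>. \<sigma> permutes {..<n}}"
  define F where "F = (\<lambda>i v. mean S (\<lambda>\<sigma>. permute_agents_F \<sigma> F0 i v))"
  define G where "G = (\<lambda>a b. mean S (\<lambda>\<sigma>. permute_agents_G \<sigma> G0 a b))"
  have "finite S" "S \<noteq> {}"
    unfolding S_def using finite_permutations permutes_id by blast+
  moreover have "\<forall>\<sigma>\<in>S. pep_feasible n p q cs (permute_agents_F \<sigma> F0) (permute_agents_G \<sigma> G0) \<and>
      pep_obj n p q cF cG (permute_agents_F \<sigma> F0) (permute_agents_G \<sigma> G0) = pep_obj n p q cF cG F0 G0"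
    using pep_permute_agents[OF _ equiv] opt unfolding S_def pep_optimal_def by blast
  ultimately have "pep_optimal n p q cs cF cG F G"
    unfolding F_def G_def using opt by (rule pep_optimal_mean)
  moreover have "permute_agents_F \<tau> F = F \<and> permute_agents_G \<tau> G = G" if "\<tau> permutes {..<n}" for \<tau>
  proof -
    have "F (\<tau> i) v = F i v" for i v
      using mean_permutations_compose_right[OF that, of "\<lambda>\<sigma>. F0 (\<sigma> i) v"]
      by (simp add: F_def S_def permute_agents_F_def)
    moreover have "G (\<tau> i, c) (\<tau> j, c') = G (i, c) (j, c')" for i c j c'
      using mean_permutations_compose_right[OF that, of "\<lambda>\<sigma>. G0 (\<sigma> i, c) (\<sigma> j, c')"]
      by (simp add: G_def S_def permute_agents_G_def)
    ultimately show ?thesis by (simp add: permute_agents_F_def permute_agents_G_def)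
  qed
  ultimately show thesis using that by blast
qed

lemma pep_optimal_symmetric_exists:
  assumes "0 < n" "\<forall>i<n. \<forall>j<n. agents_equivalent n p q cs cF cG i j"
    and "pep_optimal n p q cs cF cG F0 G0"
  obtains F G where "pep_optimal n p q cs cF cG F G"
    and "\<And>i v. i < n \<Longrightarrow> F i v = F 0 v"
    and "\<And>i c c'. i < n \<Longrightarrow> G (i, c) (i, c') = G (0, c) (0, c')"
proof -
  obtain F G where opt: "pep_optimal n p q cs cF cG F G"
    and inv: "\<And>\<tau>. \<tau> permutes {..<n} \<Longrightarrow> permute_agents_F \<tau> F = F \<and> permute_agents_G \<tau> G = G"
    using pep_optimal_agent_invariant_exists[OF assms(2,3)] by blast
  have "F i v = F 0 v \<and> G (i, c) (i, c') = G (0, c) (0, c')" if "i < n" for i v c c'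
  proof -
    have "Transposition.transpose 0 i permutes {..<n}" using that assms(1) by (intro permutes_swap_id) auto
    from inv[OF this] show ?thesis
      unfolding permute_agents_F_def permute_agents_G_def fun_eq_iff
      by (metis fst_conv snd_conv transpose_apply_first)
  qed
  then show thesis using that opt by blast
qed

lemma pep_feasible_gram_factor:
  assumes "pep_feasible n p q cs F G" "n * p \<le> CARD('d)"
  obtains P :: "nat \<times> nat \<Rightarrow> real^'d" where "is_gram n p G P"
proof -
  have "finite (blk n p)" by (simp add: blk_def)
  moreover have "psd_on (blk n p) G" using assms(1) by (simp add: pep_feasible_def)
  moreover have "card (blk n p) \<le> DIM(real^'d)"
    using assms(2) by (simp add: blk_def card_cartesian_product)
  ultimately show thesis
    using that unfolding is_gram_def by (rule psd_on_gram_factor)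
qed

lemma gram_blocks_eq_imp_orthogonal_matrices:
  fixes P :: "nat \<times> nat \<Rightarrow> real^'d"
  assumes "is_gram n p G P" "0 < n"
    and "\<And>i c c'. i < n \<Longrightarrow> G (i, c) (i, c') = G (0, c) (0, c')"
  obtains R :: "nat \<Rightarrow> real^'d^'d" where "R 0 = mat 1"
    and "\<And>i. i < n \<Longrightarrow> orthogonal_matrix (R i) \<and> (\<forall>c<p. P (i, c) = R i *v P (0, c))"
proof -
  have "\<exists>R. orthogonal_matrix R \<and> (\<forall>c<p. P (i, c) = R *v P (0, c))" if "i < n" for i
  proof -
    have "P (0, c) \<bullet> P (0, c') = P (i, c) \<bullet> P (i, c')" if "c < p" "c' < p" for c c'
    proof -
      have "(0, c) \<in> blk n p" "(0, c') \<in> blk n p" "(i, c) \<in> blk n p" "(i, c') \<in> blk n p"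
        using that \<open>i < n\<close> assms(2) by (auto simp: blk_def)
      then show ?thesis using assms(1) assms(3)[OF \<open>i < n\<close>] unfolding is_gram_def by metis
    qed
    then show ?thesis
      using orthogonal_matrix_extends_gram[of p "\<lambda>c. P (0, c)" "\<lambda>c. P (i, c)"] by metis
  qed
  then obtain R where R: "\<And>i. i < n \<Longrightarrow> orthogonal_matrix (R i) \<and> (\<forall>c<p. P (i, c) = R i *v P (0, c))"
    by metis
  show thesis
  proof (rule that[of "R(0 := mat 1)"])
    fix i assume "i < n"
    then show "orthogonal_matrix ((R(0 := mat 1)) i) \<and> (\<forall>c<p. P (i, c) = (R(0 := mat 1)) i *v P (0, c))"
      using R[OF \<open>i < n\<close>] by (cases "i = 0") (simp_all add: orthogonal_matrix_id)
  qed simp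
qed

lemma interpolates_orthogonal_change_of_variables:
  fixes R :: "real^'d^'d"
  assumes f: "interpolates Fc f T" and R: "orthogonal_matrix R"
    and Fc: "(\<lambda>x. f (transpose R *v x)) \<in> Fc"
  shows "interpolates Fc (\<lambda>x. f (transpose R *v x)) ((\<lambda>(x, g, v). (R *v x, R *v g, v)) ` T)"
  unfolding interpolates_def
proof (intro conjI ballI)
  show "(\<lambda>x. f (transpose R *v x)) \<in> Fc" by (rule Fc)
next
  fix t assume "t \<in> (\<lambda>(x, g, v). (R *v x, R *v g, v)) ` T"
  then obtain x g v where t: "t = (R *v x, R *v g, v)" and xgv: "(x, g, v) \<in> T" by auto
  have val: "f x = v" and der: "(f has_derivative (\<lambda>h. g \<bullet> h)) (at x)"
    using f xgv unfolding interpolates_def by auto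
  have R_inverse: "transpose R *v (R *v y) = y" for y
    using R by (simp add: orthogonal_matrix_def matrix_vector_mul_assoc)
  have "((\<lambda>y. transpose R *v y) has_derivative (\<lambda>h. transpose R *v h)) (at (R *v x))"
    by (rule bounded_linear_imp_has_derivative[OF matrix_vector_mul_bounded_linear])
  moreover have "(f has_derivative (\<lambda>h. g \<bullet> h)) (at (transpose R *v (R *v x)))"
    using der R_inverse by simp
  ultimately have "((\<lambda>y. f (transpose R *v y)) has_derivative (\<lambda>h. g \<bullet> (transpose R *v h))) (at (R *v x))"
    by (rule has_derivative_compose)
  moreover have "(\<lambda>h. g \<bullet> (transpose R *v h)) = (\<lambda>h. (R *v g) \<bullet> h)"
    by (rule ext) (metis dot_lmul_matrix vector_transpose_matrix)
  ultimately show "case t of (x', g', v') \<Rightarrow>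
      f (transpose R *v x') = v' \<and> ((\<lambda>x. f (transpose R *v x)) has_derivative (\<lambda>h. g' \<bullet> h)) (at x')"
    using t val R_inverse by simp
qed

lemma interpolates_agent_triplets_orthogonal_change:
  fixes R :: "real^'d^'d"
  assumes "interpolates Fc f (agent_triplets m xc gc fv P F j)" "orthogonal_matrix R"
    and "(\<lambda>x. f (transpose R *v x)) \<in> Fc" "\<forall>k<m. xc k < p \<and> gc k < p"
    and "\<forall>c<p. P (i, c) = R *v P (j, c)" "\<forall>k<m. F i (fv k) = F j (fv k)"
  shows "interpolates Fc (\<lambda>x. f (transpose R *v x)) (agent_triplets m xc gc fv P F i)"
proof -
  have "agent_triplets m xc gc fv P F i
      = (\<lambda>(x, g, v). (R *v x, R *v g, v)) ` agent_triplets m xc gc fv P F j"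
    using assms(4-6) unfolding agent_triplets_def by force
  then show ?thesis using interpolates_orthogonal_change_of_variables[OF assms(1-3)] by simp
qed

lemma interpolates_agent_triplets_value:
  assumes "interpolates Fc f (agent_triplets m xc gc fv P F i)" "k < m"
  shows "f (P (i, xc k)) = F i (fv k)"
proof -
  have "(P (i, xc k), P (i, gc k), F i (fv k)) \<in> agent_triplets m xc gc fv P F i"
    using assms(2) unfolding agent_triplets_def by blast
  then show ?thesis using assms(1) unfolding interpolates_def by fastforce
qed

theorem proposition5:
  fixes n p q m :: nat
    and cs :: "lmi list"
    and cF :: "nat \<Rightarrow> nat \<Rightarrow> real"
    and cG :: "nat \<times> nat \<Rightarrow> nat \<times> nat \<Rightarrow> real"
    and xc gc fv :: "nat \<Rightarrow> nat"
    and Fc :: "(real^'d \<Rightarrow> real) set"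
  assumes n_pos: "1 \<le> n"
    and idx: "\<forall>k<m. xc k < p \<and> gc k < p \<and> fv k < q"
    and equiv: "\<forall>i<n. \<forall>j<n. agents_equivalent n p q cs cF cG i j"
    and opt_exists: "\<exists>F G. pep_optimal n p q cs cF cG F G"
    and interp: "\<forall>F G (P :: nat \<times> nat \<Rightarrow> real^'d) i.
                   pep_feasible n p q cs F G \<longrightarrow> is_gram n p G P \<longrightarrow> i < n \<longrightarrow>
                   (\<exists>f. interpolates Fc f (agent_triplets m xc gc fv P F i))"
    and class_invariant: "\<forall>f\<in>Fc. \<forall>R :: real^'d^'d. orthogonal_matrix R \<longrightarrow>
                   (\<lambda>x. f (transpose R *v x)) \<in> Fc"
    and dim: "n * p \<le> CARD('d)"
  shows "\<exists>F G (P :: nat \<times> nat \<Rightarrow> real^'d) (f :: nat \<Rightarrow> real^'d \<Rightarrow> real) (R :: nat \<Rightarrow> real^'d^'d).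
           pep_optimal n p q cs cF cG F G \<and> is_gram n p G P \<and>
           (\<forall>i<n. interpolates Fc (f i) (agent_triplets m xc gc fv P F i)) \<and>
           (\<forall>i<n. orthogonal_matrix (R i) \<and> (\<forall>k<m. P (i, xc k) = R i *v P (0, xc k))) \<and>
           (\<forall>i<n. \<forall>j<n. \<forall>k<m. f i (P (i, xc k)) = f j (P (j, xc k))) \<and>
           (\<forall>i<n. \<forall>x. f i x = f 0 (transpose (R i) *v x))"
proof -
  have n0: "0 < n" using n_pos by simp
  obtain F0 G0 where "pep_optimal n p q cs cF cG F0 G0" using opt_exists by blast
  then obtain F G where opt: "pep_optimal n p q cs cF cG F G"
    and F_eq: "\<And>i v. i < n \<Longrightarrow> F i v = F 0 v"
    and G_eq: "\<And>i c c'. i < n \<Longrightarrow> G (i, c) (i, c') = G (0, c) (0, c')"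
    using pep_optimal_symmetric_exists[OF n0 equiv] by blast
  have feas: "pep_feasible n p q cs F G" using opt by (simp add: pep_optimal_def)
  then obtain P :: "nat \<times> nat \<Rightarrow> real^'d" where gram: "is_gram n p G P"
    using dim by (rule pep_feasible_gram_factor)
  obtain f0 where f0: "interpolates Fc f0 (agent_triplets m xc gc fv P F 0)"
    using interp feas gram n0 by blast
  obtain R where R_0: "R 0 = mat 1"
    and R: "\<And>i. i < n \<Longrightarrow> orthogonal_matrix (R i) \<and> (\<forall>c<p. P (i, c) = R i *v P (0, c))"
    using gram_blocks_eq_imp_orthogonal_matrices[OF gram n0 G_eq] by blast
  define f where "f = (\<lambda>i x. f0 (transpose (R i) *v x))"
  have interp_i: "interpolates Fc (f i) (agent_triplets m xc gc fv P F i)" if "i < n" for i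
    unfolding f_def using f0 R[OF that] class_invariant idx F_eq[OF that]
    by (intro interpolates_agent_triplets_orthogonal_change) (auto simp: interpolates_def)
  have f_0: "f 0 = f0" by (simp add: f_def R_0 transpose_mat)
  have "\<forall>i<n. \<forall>x. f i x = f 0 (transpose (R i) *v x)" unfolding f_0 by (simp add: f_def)
  moreover have "\<forall>i<n. \<forall>j<n. \<forall>k<m. f i (P (i, xc k)) = f j (P (j, xc k))"
  proof -
    have "f i (P (i, xc k)) = F 0 (fv k)" if "i < n" "k < m" for i k
      using interpolates_agent_triplets_value[OF interp_i[OF that(1)] that(2)] F_eq[OF that(1)] by simp
    then show ?thesis by simp
  qed
  moreover have "\<forall>i<n. orthogonal_matrix (R i) \<and> (\<forall>k<m. P (i, xc k) = R i *v P (0, xc k))"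
    using R idx by blast
  ultimately show ?thesis using opt gram interp_i by blast
qed

end
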